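(* Let $(X,\mu)$ be a probability space and let $f\in L^1(X,\mu)$ be real-valued with $\int f\,d\mu=0$ and $\int e^{-\alpha f}\,d\mu<\infty$ for all $\alpha>0$. Then for every integer $n\geq1$, \[ \int\big(e^{-f}-1\big)^{2n}\,d\mu\leq 2^{2n-2}\int\big(e^{-2nf}-1\big)\,d\mu . \] Moreover, if additionally $f\in L^4(X,\mu)$, then \[ \Big|\int e^{\mathrm{i} f}\,d\mu-e^{-\frac12\|f\|_{L^2}^2}\Big|\leq\frac{\|f\|_{L^3}^3}{6}+\frac{\|f\|_{L^2}^4}{8}. \] *)

theory Defs
  imports "HOL-Probability.Probability"
begin

end

theory Submission
  imports Defs
begin

text \<open>
  The moment bound integrates the pointwise inequality
  \<open>(e\<^sup>-\<^sup>x - 1)\<^sup>2\<^sup>n \<le> e\<^sup>-\<^sup>2\<^sup>n\<^sup>x - 1 + 2nx\<close>; the linear term integrates to zero because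
  \<open>f\<close> is centred, and the factor \<open>2\<^sup>2\<^sup>n\<^sup>-\<^sup>2 \<ge> 1\<close> only weakens the bound.
  The bound on the characteristic function combines the second order Taylor estimate
  \<open>|\<integral>e\<^sup>i\<^sup>f - (1 - \<integral>f\<^sup>2/2)| \<le> \<integral>|f|\<^sup>3/6\<close> with \<open>|e\<^sup>-\<^sup>s - (1 - s)| \<le> s\<^sup>2/2\<close> at \<open>s = \<integral>f\<^sup>2/2\<close>.
\<close>

lemma one_add_mult_add_power_le_power:
  fixes s :: real
  assumes "0 \<le> s" "2 \<le> m"
  shows "1 + real m * s + s ^ m \<le> (1 + s) ^ m"
  using assms(2)
proof (induction m rule: dec_induct)
  case base
  then show ?case by (simp add: power2_eq_square algebra_simps)
next
  case (step m)
  have "1 + real (Suc m) * s + s ^ Suc m \<le> (1 + real m * s + s ^ m) * (1 + s)"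
    using assms(1) by (simp add: algebra_simps)
  also have "\<dots> \<le> (1 + s) ^ m * (1 + s)"
    using step.IH assms(1) by (intro mult_right_mono) auto
  finally show ?case by (simp add: mult.commute)
qed

lemma exp_minus_add_mono:
  fixes p q :: real
  assumes "0 \<le> p" "p \<le> q"
  shows "exp (- p) + p \<le> exp (- q) + q"
proof -
  have "exp (- p) - exp (- q) = exp (- p) * (1 - exp (- (q - p)))"
    by (simp add: algebra_simps flip: exp_add)
  also have "\<dots> \<le> 1 * (q - p)"
  proof (rule mult_mono)
    show "1 - exp (- (q - p)) \<le> q - p"
      using exp_ge_add_one_self[of "- (q - p)"] by linarith
  qed (use assms in simp_all)
  finally show ?thesis by simp
qed

lemma exp_minus_sub_one_even_power_le:
  fixes x :: real
  assumes "1 \<le> n"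
  shows "(exp (- x) - 1) ^ (2 * n) \<le> exp (- (2 * real n) * x) - 1 + 2 * real n * x"
proof -
  have exp_power: "exp (- (2 * real n) * x) = exp (- x) ^ (2 * n)"
    by (simp add: mult.commute flip: exp_of_nat_mult)
  show ?thesis
  proof (cases "x \<le> 0")
    case True
    define s where "s = exp (- x) - 1"
    have "- x \<le> s"
      using exp_ge_add_one_self[of "- x"] by (simp add: s_def)
    then have "- (2 * real n * s) \<le> 2 * real n * x"
      using mult_left_mono[of "- x" s "2 * real n"] by simp
    moreover have "1 + real (2 * n) * s + s ^ (2 * n) \<le> (1 + s) ^ (2 * n)"
      using True \<open>- x \<le> s\<close> assms by (intro one_add_mult_add_power_le_power) auto
    ultimately have "s ^ (2 * n) \<le> (1 + s) ^ (2 * n) - 1 + 2 * real n * x"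
      by (simp only: of_nat_mult of_nat_numeral)
    then show ?thesis
      unfolding exp_power by (simp add: s_def)
  next
    case False
    define y where "y = exp (- x)"
    have "0 < y" "y < 1"
      using False by (auto simp: y_def)
    have "(exp (- x) - 1) ^ (2 * n) = (1 - y) ^ (2 * n)"
      by (simp only: y_def power_mult power2_commute)
    also have "\<dots> \<le> (1 - y)\<^sup>2"
      using \<open>0 < y\<close> \<open>y < 1\<close> assms by (intro power_decreasing) auto
    also have "\<dots> \<le> exp (- (2 * x)) - 1 + 2 * x"
    proof -
      have "exp (- (2 * x)) = y\<^sup>2"
        by (simp add: y_def power2_eq_square flip: exp_add)
      moreover have "1 - x \<le> y"
        using exp_ge_add_one_self[of "- x"] by (simp add: y_def)
      ultimately show ?thesis by (simp add: power2_eq_square algebra_simps)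
    qed
    also have "\<dots> \<le> exp (- (2 * real n) * x) - 1 + 2 * real n * x"
      using exp_minus_add_mono[of "2 * x" "2 * real n * x"] False assms by simp
    finally show ?thesis .
  qed
qed

lemma (in prob_space) integral_exp_minus_sub_one_even_power_le:
  fixes f :: "'a \<Rightarrow> real"
  assumes "1 \<le> n" "integrable M f" "expectation f = 0"
    and "integrable M (\<lambda>x. exp (- (2 * real n) * f x))"
  shows "expectation (\<lambda>x. (exp (- f x) - 1) ^ (2 * n))
           \<le> expectation (\<lambda>x. exp (- (2 * real n) * f x) - 1)"
proof -
  have "expectation (\<lambda>x. (exp (- f x) - 1) ^ (2 * n))
          \<le> expectation (\<lambda>x. (exp (- (2 * real n) * f x) - 1) + 2 * real n * f x)"
  proof (rule integral_mono')
    show "integrable M (\<lambda>x. (exp (- (2 * real n) * f x) - 1) + 2 * real n * f x)"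
      using assms(2,4) by simp
    show "(exp (- f x) - 1) ^ (2 * n) \<le> (exp (- (2 * real n) * f x) - 1) + 2 * real n * f x" for x
      using exp_minus_sub_one_even_power_le[OF assms(1)] by simp
    show "0 \<le> (exp (- (2 * real n) * f x) - 1) + 2 * real n * f x" for x
      using exp_ge_add_one_self[of "- (2 * real n) * f x"] by simp
  qed
  also have "\<dots> = expectation (\<lambda>x. exp (- (2 * real n) * f x) - 1)"
    using assms(2-4) by simp
  finally show ?thesis .
qed

lemma abs_exp_minus_sub_linear_le:
  fixes s :: real
  assumes "0 \<le> s"
  shows "\<bar>exp (- s) - (1 - s)\<bar> \<le> s\<^sup>2 / 2"
proof (cases "s = 0")
  case False
  then obtain t where "- s < t" "t < 0" and exp_eq: "exp (- s) = (\<Sum>m<2. exp 0 / fact m * (- s) ^ m) + exp t / fact 2 * (- s) ^ 2"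
    using Maclaurin_minus[of "- s" 2 "\<lambda>_. exp" exp] assms by fastforce
  then have remainder: "exp (- s) - (1 - s) = exp t * s\<^sup>2 / 2"
    by (simp add: eval_nat_numeral)
  have "exp t * s\<^sup>2 \<le> s\<^sup>2"
    using \<open>t < 0\<close> by (intro mult_left_le_one_le) auto
  then show ?thesis unfolding remainder by simp
qed simp

lemma (in finite_measure) integrable_abs_power_le:
  fixes f :: "'a \<Rightarrow> real"
  assumes "integrable M (\<lambda>x. \<bar>f x\<bar> ^ m)" "f \<in> borel_measurable M" "k \<le> m"
  shows "integrable M (\<lambda>x. \<bar>f x\<bar> ^ k)"
proof (rule Bochner_Integration.integrable_bound)
  show "integrable M (\<lambda>x. 1 + \<bar>f x\<bar> ^ m)" using assms(1) by simp
  have "\<bar>y\<bar> ^ k \<le> 1 + \<bar>y\<bar> ^ m" for y :: real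
  proof (cases "\<bar>y\<bar> \<le> 1")
    case True
    then show ?thesis using power_le_one[of "\<bar>y\<bar>" k] by (simp add: add_increasing2)
  next
    case False
    then have "\<bar>y\<bar> ^ k \<le> \<bar>y\<bar> ^ m" by (intro power_increasing \<open>k \<le> m\<close>) simp
    then show ?thesis by simp
  qed
  then show "AE x in M. norm (\<bar>f x\<bar> ^ k) \<le> norm (1 + \<bar>f x\<bar> ^ m)" by simp
qed (use assms(2) in simp)

lemma (in prob_space) cmod_integral_cis_sub_quadratic_le:
  fixes f :: "'a \<Rightarrow> real"
  assumes f: "integrable M f" "expectation f = 0"
    and f2: "integrable M (\<lambda>x. f x ^ 2)" and f3: "integrable M (\<lambda>x. \<bar>f x\<bar> ^ 3)"
  shows "cmod ((\<integral>x. cis (f x) \<partial>M) - (1 - expectation (\<lambda>x. f x ^ 2) / 2))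
           \<le> expectation (\<lambda>x. \<bar>f x\<bar> ^ 3) / 6"
proof -
  have [measurable]: "f \<in> borel_measurable M" using f(1) by measurable
  have "char (distr M borel f) 1 = (\<integral>x. cis (f x) \<partial>M)"
    by (simp add: char_def integral_distr cis_conv_exp)
  moreover have "variance f = expectation (\<lambda>x. f x ^ 2)"
    using f(2) by simp
  moreover have "expectation (\<lambda>x. min (6 * (f x)\<^sup>2) (\<bar>f x\<bar> ^ 3)) \<le> expectation (\<lambda>x. \<bar>f x\<bar> ^ 3)"
  proof (rule integral_mono[OF _ f3])
    show "integrable M (\<lambda>x. min (6 * (f x)\<^sup>2) (\<bar>f x\<bar> ^ 3))"
      by (rule Bochner_Integration.integrable_bound[of _ "\<lambda>x. 6 * (f x)\<^sup>2"]) (use f2 in auto)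
  qed simp
  ultimately show ?thesis
    using char_approx3'[of f "expectation (\<lambda>x. f x ^ 2)" "distr M borel f" 1] f f2 by simp
qed

lemma (in prob_space) cmod_integral_cis_sub_exp_le:
  fixes f :: "'a \<Rightarrow> real"
  assumes "integrable M f" "expectation f = 0" "integrable M (\<lambda>x. f x ^ 4)"
  shows "cmod ((\<integral>x. cis (f x) \<partial>M) - exp (- (1 / 2) * expectation (\<lambda>x. f x ^ 2)))
           \<le> expectation (\<lambda>x. \<bar>f x\<bar> ^ 3) / 6 + (expectation (\<lambda>x. f x ^ 2))\<^sup>2 / 8"
proof -
  have "integrable M (\<lambda>x. \<bar>f x\<bar> ^ 4)"
    using assms(3) by (simp add: power_even_abs_numeral)
  moreover have "f \<in> borel_measurable M"
    using assms(1) by measurable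
  ultimately have square: "integrable M (\<lambda>x. \<bar>f x\<bar> ^ 2)" and cube: "integrable M (\<lambda>x. \<bar>f x\<bar> ^ 3)"
    by (rule integrable_abs_power_le; simp)+
  define \<sigma> where "\<sigma> = expectation (\<lambda>x. f x ^ 2)"
  have "cmod ((\<integral>x. cis (f x) \<partial>M) - (1 - \<sigma> / 2)) \<le> expectation (\<lambda>x. \<bar>f x\<bar> ^ 3) / 6"
    unfolding \<sigma>_def
    using assms(1,2) cube square by (intro cmod_integral_cis_sub_quadratic_le) simp_all
  moreover have "norm (complex_of_real (1 - \<sigma> / 2) - exp (- (\<sigma> / 2))) \<le> \<sigma>\<^sup>2 / 8"
  proof -
    have "0 \<le> \<sigma>"
      unfolding \<sigma>_def by simp
    then have "\<bar>exp (- (\<sigma> / 2)) - (1 - \<sigma> / 2)\<bar> \<le> \<sigma>\<^sup>2 / 8"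
      using abs_exp_minus_sub_linear_le[of "\<sigma> / 2"] by (simp add: power_divide)
    then show ?thesis
      by (simp only: norm_of_real abs_minus_commute flip: of_real_diff)
  qed
  ultimately have "cmod ((\<integral>x. cis (f x) \<partial>M) - exp (- (\<sigma> / 2)))
      \<le> expectation (\<lambda>x. \<bar>f x\<bar> ^ 3) / 6 + \<sigma>\<^sup>2 / 8"
    by (rule norm_diff_triangle_le)
  then show ?thesis
    unfolding \<sigma>_def by simp
qed

theorem lemma4p4:
  fixes M :: "'a measure" and f :: "'a \<Rightarrow> real"
  assumes "prob_space M"
    and "integrable M f"
    and "(\<integral>x. f x \<partial>M) = 0"
    and "\<And>\<alpha>::real. \<alpha> > 0 \<Longrightarrow> integrable M (\<lambda>x. exp (- \<alpha> * f x))"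
  shows "(\<forall>n::nat. n \<ge> 1 \<longrightarrow>
            (\<integral>x. (exp (- f x) - 1) ^ (2*n) \<partial>M)
              \<le> 2 ^ (2*n - 2) * (\<integral>x. (exp (- (2 * real n) * f x) - 1) \<partial>M))
       \<and> (integrable M (\<lambda>x. (f x) ^ 4) \<longrightarrow>
            cmod ((\<integral>x. cis (f x) \<partial>M) - complex_of_real (exp (- (1/2) * (\<integral>x. (f x)^2 \<partial>M))))
              \<le> (\<integral>x. \<bar>f x\<bar> ^ 3 \<partial>M) / 6 + (\<integral>x. (f x)^2 \<partial>M) ^ 2 / 8)"
proof (intro conjI allI impI)
  interpret prob_space M by (rule assms(1))
  fix n :: nat
  assume "1 \<le> n"
  let ?moment = "expectation (\<lambda>x. (exp (- f x) - 1) ^ (2 * n))"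
  let ?bound = "expectation (\<lambda>x. exp (- (2 * real n) * f x) - 1)"
  have "?moment \<le> ?bound"
    using \<open>1 \<le> n\<close> assms(2-4) by (intro integral_exp_minus_sub_one_even_power_le) auto
  moreover have "0 \<le> ?moment"
    by (simp add: zero_le_even_power)
  ultimately have "0 \<le> ?bound"
    by linarith
  have "?moment \<le> 1 * ?bound"
    using \<open>?moment \<le> ?bound\<close> by simp
  also have "\<dots> \<le> 2 ^ (2 * n - 2) * ?bound"
    by (rule mult_right_mono[OF one_le_power \<open>0 \<le> ?bound\<close>]) simp
  finally show "?moment \<le> 2 ^ (2 * n - 2) * ?bound" .
next
  interpret prob_space M by (rule assms(1))
  assume "integrable M (\<lambda>x. f x ^ 4)"
  with assms(2,3) show "cmod ((\<integral>x. cis (f x) \<partial>M) - exp (- (1 / 2) * expectation (\<lambda>x. f x ^ 2)))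
      \<le> expectation (\<lambda>x. \<bar>f x\<bar> ^ 3) / 6 + (expectation (\<lambda>x. f x ^ 2))\<^sup>2 / 8"
    by (rule cmod_integral_cis_sub_exp_le)
qed

end
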